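(* Let $r,p\in\mathbb{C}$ with $0<|r|,|p|<1$ and $a,z\in\mathbb{C}^\times$ generic (so that all expressions are defined). Then \begin{align*} \Omega_a(z;r,p)&=\Omega_a(z^{-1};r,p)\frac{\theta_0(z^{-1}a;p)\,\theta_0(za^{-1};r)}{\theta_0(z^{-1}a^{-1};p)\,\theta_0(za;r)},\\ \Omega_a(pz;r,p)&=\frac{\theta_0(za;r)}{\theta_0(za^{-1};r)}\Omega_a(z;r,p),\\ \Omega_a(p^{-1}z;r,p)&=\frac{\theta_0(za^{-1}p^{-1};r)}{\theta_0(zap^{-1};r)}\Omega_a(z;r,p). \end{align*}
   Context: $(u;q)=\prod_{n\ge0}(1-uq^n)$, $(u;r,p)=\prod_{n,m\ge0}(1-ur^np^m)$, $\theta_0(u;q)=(u;q)(qu^{-1};q)$, and the phase function is $\Omega_a(z;r,p)=\frac{(za^{-1};r,p)(z^{-1}a^{-1}rp;r,p)}{(za;r,p)(z^{-1}arp;r,p)}$. *)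

theory Defs
  imports "HOL-Analysis.Analysis"
begin

definition qpoch :: "complex \<Rightarrow> complex \<Rightarrow> complex" where
  "qpoch u q = (\<Prod>n. 1 - u * q ^ n)"

definition qpoch2 :: "complex \<Rightarrow> complex \<Rightarrow> complex \<Rightarrow> complex" where
  "qpoch2 u r p = (\<Prod>n. \<Prod>m. 1 - u * r ^ n * p ^ m)"

definition theta0 :: "complex \<Rightarrow> complex \<Rightarrow> complex" where
  "theta0 u q = qpoch u q * qpoch (q / u) q"

definition Omega :: "complex \<Rightarrow> complex \<Rightarrow> complex \<Rightarrow> complex \<Rightarrow> complex" where
  "Omega a z r p =
     (qpoch2 (z / a) r p * qpoch2 (r * p / (z * a)) r p) /
     (qpoch2 (z * a) r p * qpoch2 (a * r * p / z) r p)"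

end

theory Submission
  imports Defs
begin

text \<open>Splitting off the factors with index \<open>m = 0\<close> (resp. \<open>n = 0\<close>) of the double
product gives \<open>(u;r,p) = (u;r) (pu;r,p)\<close> and \<open>(u;r,p) = (u;p) (ru;r,p)\<close>. Under \<open>z \<mapsto> pz\<close>
the four double products in \<Omega> therefore change by single products \<open>(\<cdot>;r)\<close>, which
assemble into the two theta functions; under \<open>z \<mapsto> z\<^sup>-\<^sup>1\<close>, splitting off both a row and
a column matches the numerator and denominator of \<open>\<Omega>\<^sub>a(z)\<close> with those of \<open>\<Omega>\<^sub>a(z\<^sup>-\<^sup>1)\<close>
up to four theta functions. Convergence of the double product rests on
\<open>|(w;q) - 1| \<le> e\<^sup>s - 1 \<le> s e\<^sup>s\<close> with \<open>s = |w|/(1-|q|)\<close>.\<close>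

lemma norm_prodinf_minus_one_le:
  fixes f :: "nat \<Rightarrow> 'a :: {real_normed_field, banach}"
  assumes "summable (\<lambda>n. norm (f n))"
  shows "norm ((\<Prod>n. 1 + f n) - 1) \<le> exp (\<Sum>n. norm (f n)) - 1"
proof -
  have "convergent_prod (\<lambda>n. 1 + f n)"
    using assms by (intro abs_convergent_prod_imp_convergent_prod summable_imp_abs_convergent_prod) simp
  then have lim: "(\<lambda>n. norm ((\<Prod>i\<le>n. 1 + f i) - 1)) \<longlonglongrightarrow> norm ((\<Prod>n. 1 + f n) - 1)"
    by (intro tendsto_intros convergent_prod_LIMSEQ)
  have partial: "norm ((\<Prod>i\<le>n. 1 + f i) - 1) \<le> exp (\<Sum>n. norm (f n)) - 1" for n
  proof -
    have "norm ((\<Prod>i\<le>n. 1 + f i) - 1) \<le> (\<Prod>i\<le>n. 1 + norm (f i)) - 1"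
      by (rule norm_prod_minus1_le_prod_minus1)
    moreover have "(\<Prod>i\<le>n. 1 + norm (f i)) \<le> exp (\<Sum>i\<le>n. norm (f i))"
      by (rule prod_le_exp_sum) simp
    moreover have "(\<Sum>i\<le>n. norm (f i)) \<le> (\<Sum>i. norm (f i))"
      unfolding lessThan_Suc_atMost[symmetric] using assms by (intro sum_le_suminf) auto
    ultimately show ?thesis
      by (meson diff_right_mono exp_le_cancel_iff order_trans)
  qed
  show ?thesis
    using partial by (intro LIMSEQ_le_const2[OF lim]) blast
qed

lemma convergent_prod_qpoch:
  fixes u q :: "'a :: {real_normed_field, banach}"
  assumes "norm q < 1"
  shows "convergent_prod (\<lambda>n. 1 - u * q ^ n)"
proof -
  have "(\<lambda>n. norm ((1 - u * q ^ n) - 1)) = (\<lambda>n. norm u * norm q ^ n)"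
    by (simp add: norm_mult norm_power)
  moreover have "summable (\<lambda>n. norm u * norm q ^ n)"
    using assms by (intro summable_mult summable_geometric) simp
  ultimately have "summable (\<lambda>n. norm ((1 - u * q ^ n) - 1))"
    by simp
  then show ?thesis
    by (intro abs_convergent_prod_imp_convergent_prod summable_imp_abs_convergent_prod)
qed

lemma norm_qpoch_minus_one_le:
  assumes "norm q < 1"
  shows "norm (qpoch u q - 1) \<le> exp (norm u / (1 - norm q)) - 1"
proof -
  have "summable (\<lambda>n. norm (- (u * q ^ n)))" and "(\<Sum>n. norm (- (u * q ^ n))) = norm u / (1 - norm q)"
    using assms by (simp_all add: norm_mult norm_power summable_mult summable_geometric suminf_mult
        suminf_geometric divide_simps)
  then show ?thesis
    using norm_prodinf_minus_one_le[of "\<lambda>n. - (u * q ^ n)"] by (simp add: qpoch_def)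
qed

lemma convergent_prod_qpoch_geometric:
  assumes "norm r < 1" "norm p < 1"
  shows "convergent_prod (\<lambda>n. qpoch (u * r ^ n) p)"
proof -
  define S where "S = norm u / (1 - norm p)"
  have bound: "norm (qpoch (u * r ^ n) p - 1) \<le> S * norm r ^ n * exp S" for n
  proof -
    define s where "s = S * norm r ^ n"
    have "0 \<le> S" "norm r ^ n \<le> 1"
      using assms by (simp_all add: S_def power_le_one)
    then have "0 \<le> s" "s \<le> S"
      by (simp_all add: s_def mult_left_le)
    have "norm (qpoch (u * r ^ n) p - 1) \<le> exp s - 1"
      using norm_qpoch_minus_one_le[OF assms(2), of "u * r ^ n"]
      by (simp add: s_def S_def norm_mult norm_power)
    also have "exp s - 1 \<le> s * exp s"
    proof -
      have "(1 - s) * exp s \<le> exp (- s) * exp s"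
        using exp_ge_add_one_self[of "- s"] by (intro mult_right_mono) auto
      then show ?thesis
        by (simp add: exp_minus algebra_simps)
    qed
    also have "\<dots> \<le> s * exp S"
      using \<open>0 \<le> s\<close> \<open>s \<le> S\<close> by (intro mult_left_mono) auto
    finally show ?thesis
      by (simp only: s_def)
  qed
  have "summable (\<lambda>n. S * norm r ^ n * exp S)"
    using assms by (intro summable_mult summable_mult2 summable_geometric) simp
  then have "summable (\<lambda>n. norm (qpoch (u * r ^ n) p - 1))"
    by (rule summable_comparison_test') (simp add: bound)
  then show ?thesis
    by (intro abs_convergent_prod_imp_convergent_prod summable_imp_abs_convergent_prod)
qed

lemma qpoch_unfold:
  assumes "norm q < 1"
  shows "qpoch u q = (1 - u) * qpoch (q * u) q"
  using has_prod_ignore_initial_segment'[OF convergent_prod_qpoch[OF assms, of u], of 1]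
  by (simp add: qpoch_def has_prod_iff ac_simps)

lemma qpoch2_eq_prodinf_qpoch: "qpoch2 u r p = (\<Prod>n. qpoch (u * r ^ n) p)"
  unfolding qpoch2_def qpoch_def by (simp add: mult.assoc)

lemma qpoch2_unfold_r:
  assumes "norm r < 1" "norm p < 1"
  shows "qpoch2 u r p = qpoch u p * qpoch2 (r * u) r p"
  using has_prod_ignore_initial_segment'[OF convergent_prod_qpoch_geometric[OF assms, of u], of 1]
  by (simp add: qpoch2_eq_prodinf_qpoch has_prod_iff ac_simps)

lemma qpoch2_unfold_p:
  assumes "norm r < 1" "norm p < 1"
  shows "qpoch2 u r p = qpoch u r * qpoch2 (p * u) r p"
proof -
  have "qpoch u r * qpoch2 (p * u) r p = (\<Prod>n. (1 - u * r ^ n) * qpoch (p * u * r ^ n) p)"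
    unfolding qpoch_def[of u r] qpoch2_eq_prodinf_qpoch
    by (rule prodinf_mult[OF convergent_prod_qpoch[OF assms(1)] convergent_prod_qpoch_geometric[OF assms]])
  also have "\<dots> = (\<Prod>n. qpoch (u * r ^ n) p)"
  proof (rule arg_cong[where f = prodinf], rule ext)
    fix n
    show "(1 - u * r ^ n) * qpoch (p * u * r ^ n) p = qpoch (u * r ^ n) p"
      using qpoch_unfold[OF assms(2), of "u * r ^ n"] by (simp only: mult.assoc)
  qed
  finally show ?thesis by (simp add: qpoch2_eq_prodinf_qpoch)
qed

lemma qpoch2_unfold_p_r:
  assumes "norm r < 1" "norm p < 1"
  shows "qpoch2 u r p = qpoch u r * qpoch (p * u) p * qpoch2 (r * p * u) r p"
  using qpoch2_unfold_p[OF assms, of u] qpoch2_unfold_r[OF assms, of "p * u"]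
  by (simp add: ac_simps)

lemma qpoch2_unfold_r_p:
  assumes "norm r < 1" "norm p < 1"
  shows "qpoch2 u r p = qpoch u p * qpoch (r * u) r * qpoch2 (r * p * u) r p"
  using qpoch2_unfold_r[OF assms, of u] qpoch2_unfold_p[OF assms, of "r * u"]
  by (simp add: ac_simps)

lemma Omega_shift:
  fixes a w r p :: complex
  assumes "norm r < 1" "norm p < 1" "p \<noteq> 0"
    and "qpoch2 (w * a) r p \<noteq> 0" "qpoch2 (a * r * p / (p * w)) r p \<noteq> 0"
  shows "Omega a (p * w) r p * theta0 (w / a) r = theta0 (w * a) r * Omega a w r p"
proof -
  note unfold = qpoch2_unfold_p[OF assms(1,2)]
  have N1: "qpoch2 (w / a) r p = qpoch (w / a) r * qpoch2 (p * w / a) r p"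
    using unfold[of "w / a"] by simp
  have N2: "qpoch2 (r * p / (p * w * a)) r p = qpoch (r / (w * a)) r * qpoch2 (r * p / (w * a)) r p"
    using unfold[of "r / (w * a)"] assms(3) by (simp add: ac_simps)
  have D1: "qpoch2 (w * a) r p = qpoch (w * a) r * qpoch2 (p * w * a) r p"
    using unfold[of "w * a"] by (simp add: ac_simps)
  have D2: "qpoch2 (a * r * p / (p * w)) r p = qpoch (a * r / w) r * qpoch2 (a * r * p / w) r p"
    using unfold[of "a * r / w"] assms(3) by (simp add: ac_simps)
  have T1: "theta0 (w / a) r = qpoch (w / a) r * qpoch (a * r / w) r"
    by (simp add: theta0_def ac_simps)
  have T2: "theta0 (w * a) r = qpoch (w * a) r * qpoch (r / (w * a)) r"
    by (simp add: theta0_def)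
  have "qpoch (w * a) r \<noteq> 0" "qpoch (a * r / w) r \<noteq> 0"
    using assms(4,5) D1 D2 by auto
  then show ?thesis
    unfolding Omega_def N1 N2 D1 D2 T1 T2
    by (cases "qpoch2 (p * w * a) r p * qpoch2 (a * r * p / w) r p = 0") (auto simp: field_simps)
qed

lemma Omega_inversion:
  fixes a z r p :: complex
  assumes "norm r < 1" "norm p < 1" "a \<noteq> 0" "z \<noteq> 0"
    and "qpoch2 (z * a) r p \<noteq> 0" "qpoch2 (a * r * p / z) r p \<noteq> 0"
    and "qpoch2 (inverse z * a) r p \<noteq> 0" "qpoch2 (a * r * p / inverse z) r p \<noteq> 0"
    and "theta0 (inverse z * inverse a) p \<noteq> 0" "theta0 (z * a) r \<noteq> 0"
  shows "Omega a z r p = Omega a (inverse z) r p *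
           (theta0 (inverse z * a) p * theta0 (z * inverse a) r) /
           (theta0 (inverse z * inverse a) p * theta0 (z * a) r)"
proof -
  note unfold_p_r = qpoch2_unfold_p_r[OF assms(1,2)]
    and unfold_r_p = qpoch2_unfold_r_p[OF assms(1,2)]
  have N1: "qpoch2 (z / a) r p
      = qpoch (z / a) r * qpoch (p * z / a) p * qpoch2 (r * p / (inverse z * a)) r p"
    using unfold_p_r[of "z / a"] by (simp add: field_simps)
  have D1: "qpoch2 (z * a) r p
      = qpoch (z * a) r * qpoch (p * z * a) p * qpoch2 (a * r * p / inverse z) r p"
    using unfold_p_r[of "z * a"] by (simp add: field_simps)
  have N1': "qpoch2 (inverse z / a) r p
      = qpoch (inverse (z * a)) p * qpoch (r / (z * a)) r * qpoch2 (r * p / (z * a)) r p"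
    using unfold_r_p[of "inverse (z * a)"] by (simp add: field_simps)
  have D1': "qpoch2 (inverse z * a) r p
      = qpoch (a / z) p * qpoch (r * a / z) r * qpoch2 (a * r * p / z) r p"
    using unfold_r_p[of "a / z"] by (simp add: field_simps)
  have T1: "theta0 (inverse z * a) p = qpoch (a / z) p * qpoch (p * z / a) p"
    using assms(3,4) by (simp add: theta0_def field_simps)
  have T2: "theta0 (z * inverse a) r = qpoch (z / a) r * qpoch (r * a / z) r"
    using assms(3,4) by (simp add: theta0_def field_simps)
  have T3: "theta0 (inverse z * inverse a) p = qpoch (inverse (z * a)) p * qpoch (p * z * a) p"
    using assms(3,4) by (simp add: theta0_def field_simps)
  have T4: "theta0 (z * a) r = qpoch (z * a) r * qpoch (r / (z * a)) r"
    by (simp add: theta0_def)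
  have "qpoch (a / z) p \<noteq> 0" "qpoch (r * a / z) r \<noteq> 0"
    using assms(7) D1' by auto
  moreover have "qpoch (inverse (z * a)) p \<noteq> 0" "qpoch (p * z * a) p \<noteq> 0"
    using assms(9) T3 by auto
  moreover have "qpoch (z * a) r \<noteq> 0" "qpoch (r / (z * a)) r \<noteq> 0"
    using assms(10) T4 by auto
  ultimately show ?thesis
    using assms(6,8) unfolding Omega_def N1 D1 N1' D1' T1 T2 T3 T4
    by (simp add: field_simps)
qed

theorem lemmaA3:
  fixes r p a z :: complex
  assumes "0 < norm r" "norm r < 1" "0 < norm p" "norm p < 1"
    and "a \<noteq> 0" "z \<noteq> 0"
    and "\<And>w. w \<in> {z, inverse z, p * z, z / p} \<Longrightarrow>
            qpoch2 (w * a) r p \<noteq> 0 \<and> qpoch2 (a * r * p / w) r p \<noteq> 0"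
    and "theta0 (a / z) p \<noteq> 0" "theta0 (inverse (z * a)) p \<noteq> 0"
    and "theta0 (z * a) r \<noteq> 0" "theta0 (z / a) r \<noteq> 0"
    and "theta0 (z * a / p) r \<noteq> 0" "theta0 (z / (a * p)) r \<noteq> 0"
  shows "Omega a z r p = Omega a (inverse z) r p *
           (theta0 (inverse z * a) p * theta0 (z * inverse a) r) /
           (theta0 (inverse z * inverse a) p * theta0 (z * a) r) \<and>
         Omega a (p * z) r p = theta0 (z * a) r / theta0 (z * inverse a) r * Omega a z r p \<and>
         Omega a (inverse p * z) r p =
           theta0 (z * inverse a * inverse p) r / theta0 (z * a * inverse p) r * Omega a z r p"
proof -
  have r: "norm r < 1" and p: "norm p < 1" "p \<noteq> 0"
    using assms(2-4) by auto
  have nz: "qpoch2 (w * a) r p \<noteq> 0" "qpoch2 (a * r * p / w) r p \<noteq> 0"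
    if "w \<in> {z, inverse z, p * z, z / p}" for w
    using assms(7)[OF that] by auto
  have shift: "Omega a (p * z) r p * theta0 (z / a) r = theta0 (z * a) r * Omega a z r p"
    using nz[of z] nz[of "p * z"] by (intro Omega_shift[OF r p]) simp_all
  have shift_back: "Omega a z r p * theta0 (z / (a * p)) r = theta0 (z * a / p) r * Omega a (z / p) r p"
    using Omega_shift[OF r p, of "z / p" a] nz[of z] nz[of "z / p"] p(2) by (simp add: field_simps)
  show ?thesis
  proof (intro conjI)
    show "Omega a z r p = Omega a (inverse z) r p *
           (theta0 (inverse z * a) p * theta0 (z * inverse a) r) /
           (theta0 (inverse z * inverse a) p * theta0 (z * a) r)"
      using nz[of z] nz[of "inverse z"] assms(9,10)
      by (intro Omega_inversion[OF r p(1) assms(5,6)]) (simp_all add: ac_simps)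
    show "Omega a (p * z) r p = theta0 (z * a) r / theta0 (z * inverse a) r * Omega a z r p"
      using shift assms(11) by (simp add: field_simps)
    show "Omega a (inverse p * z) r p =
           theta0 (z * inverse a * inverse p) r / theta0 (z * a * inverse p) r * Omega a z r p"
      using shift_back assms(12) by (simp add: field_simps)
  qed
qed

end
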